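(* Let $\gamma:=2\Delta\lambda\max\{\lambda,\mu\}$ and $\nu:=(4\Delta\lambda\gamma)^d$. Then for all $\epsilon\in\mathbb R$, $\mathbf x\in\mathbb R^p$, $\mathbf b,\mathbf b'\in\mathbb R^V$ and $\mathbf w,\mathbf w'\in\mathbb R^E$ with $0\le\max\{\|\mathbf b-\mathbf b'\|_\infty,\|\mathbf w-\mathbf w'\|_\infty\}\le\epsilon\le1$, $$\|\mathfrak A(\mathbf x,\mathbf w,\mathbf b)-\mathfrak A(\mathbf x,\mathbf w',\mathbf b')\|_\infty\le\nu(\|\mathbf w\|_\infty+1)^d(\|\mathbf x\|_\infty+\|\mathbf b\|_\infty+1)\epsilon.$$
   Context: $\mathfrak A=(V,E,(\mathfrak a_v)_{v\in V})$ is an FNN architecture: $(V,E)$ is a finite dag and each $\mathfrak a_v:\mathbb R\to\mathbb R$ is Lipschitz continuous. Sources are input nodes $X_1,\dots,X_p$, sinks are output nodes $Y_1,\dots,Y_q$. For $\mathbf x\in\mathbb R^p$, $\mathbf w=(w_e)_{e\in E}$, $\mathbf b=(b_v)_{v\in V}$: $f_{\mathfrak A,X_i}=x_i$ and for non-input $v$, $f_{\mathfrak A,v}(\mathbf x,\mathbf w,\mathbf b)=\mathfrak a_v\big(b_v+\sum_{u:uv\in E}f_{\mathfrak A,u}(\mathbf x,\mathbf w,\mathbf b)w_{uv}\big)$; $\mathfrak A(\mathbf x,\mathbf w,\mathbf b)$ is the tuple of values at the outputs. $d$ is the depth of the dag, $\Delta\ge1$ its maximum in-degree, $\lambda\in\mathbb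 N_{>0}$ a Lipschitz constant for all $\mathfrak a_v$, and $\mu=\max_v\lceil|\mathfrak a_v(0)|\rceil$. *)

theory Defs
  imports "HOL-Analysis.Analysis"
begin

definition fnn_arch ::
  "'v set \<Rightarrow> ('v \<times> 'v) set \<Rightarrow> ('v \<Rightarrow> real \<Rightarrow> real) \<Rightarrow> 'v list \<Rightarrow> 'v list \<Rightarrow> bool" where
  "fnn_arch V E a Xs Ys \<longleftrightarrow>
     finite V \<and> E \<subseteq> V \<times> V \<and> acyclic E \<and>
     distinct Xs \<and> set Xs = {v \<in> V. \<not> (\<exists>u. (u, v) \<in> E)} \<and>
     distinct Ys \<and> set Ys = {v \<in> V. \<not> (\<exists>u. (v, u) \<in> E)} \<and>
     (\<forall>v \<in> V. \<exists>C. C-lipschitz_on UNIV (a v))"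

definition fnn_val ::
  "'v set \<Rightarrow> ('v \<times> 'v) set \<Rightarrow> ('v \<Rightarrow> real \<Rightarrow> real) \<Rightarrow> 'v list \<Rightarrow>
   (nat \<Rightarrow> real) \<Rightarrow> ('v \<times> 'v \<Rightarrow> real) \<Rightarrow> ('v \<Rightarrow> real) \<Rightarrow> 'v \<Rightarrow> real" where
  "fnn_val V E a Xs x w b = (THE f.
      (\<forall>v. v \<notin> V \<longrightarrow> f v = 0) \<and>
      (\<forall>i < length Xs. f (Xs ! i) = x i) \<and>
      (\<forall>v \<in> V - set Xs. f v = a v (b v + (\<Sum>u \<in> {u. (u, v) \<in> E}. f u * w (u, v)))))"

definition fnn_out ::
  "'v set \<Rightarrow> ('v \<times> 'v) set \<Rightarrow> ('v \<Rightarrow> real \<Rightarrow> real) \<Rightarrow> 'v list \<Rightarrow> 'v list \<Rightarrow>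
   (nat \<Rightarrow> real) \<Rightarrow> ('v \<times> 'v \<Rightarrow> real) \<Rightarrow> ('v \<Rightarrow> real) \<Rightarrow> real list" where
  "fnn_out V E a Xs Ys x w b = map (fnn_val V E a Xs x w b) Ys"

definition supn :: "'i set \<Rightarrow> ('i \<Rightarrow> real) \<Rightarrow> real" where
  "supn S g = Max (insert 0 ((\<lambda>s. \<bar>g s\<bar>) ` S))"

definition dag_depth :: "('v \<times> 'v) set \<Rightarrow> nat" where
  "dag_depth E = Max {n. E ^^ n \<noteq> {}}"

definition max_indeg :: "'v set \<Rightarrow> ('v \<times> 'v) set \<Rightarrow> nat" where
  "max_indeg V E = Max ((\<lambda>v. card {u. (u, v) \<in> E}) ` V)"

definition act_mu :: "'v set \<Rightarrow> ('v \<Rightarrow> real \<Rightarrow> real) \<Rightarrow> int" where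
  "act_mu V a = Max ((\<lambda>v. \<lceil>\<bar>a v 0\<bar>\<rceil>) ` V)"

end

theory Submission
  imports Defs
begin

(* Node values are well defined because one round of evaluation at a node reads only its
   predecessors: after more rounds than the depth of the dag the iterate no longer depends on its
   starting point, so it is the unique fixed point.

   The estimate is proved by induction on the height h of a node, the length of the longest path
   ending in it. Since |a_v z| <= |a_v 0| + lam |z|, a neuron whose inputs are bounded by Y has
   |f_v| <= m + lam (|b|_inf + Delta Y |w|_inf) <= gamma (|w|_inf + 1) Y, with m = max lam mu.
   For the perturbation, split  f_u w_uv - g_u w'_uv = (f_u - g_u) w'_uv + f_u (w_uv - w'_uv);
   as |w'| <= |w|_inf + 1 and f_u is already bounded, each layer multiplies the perturbation by at
   most kappa (|w|_inf + 1), kappa = 4 Delta lam gamma. Heights never exceed the depth d. *)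

section \<open>Heights and fixed points on finite dags\<close>

definition height_le :: "('v \<times> 'v) set \<Rightarrow> 'v \<Rightarrow> nat \<Rightarrow> bool" where
  "height_le E v n \<longleftrightarrow> (\<forall>m u. (u, v) \<in> E ^^ m \<longrightarrow> m \<le> n)"

lemma height_le_0_no_pred: "height_le E v 0 \<Longrightarrow> (u, v) \<notin> E"
proof
  assume "(u, v) \<in> E" "height_le E v 0"
  then show False
    unfolding height_le_def using relpow_1[of E] by fastforce
qed

lemma height_le_Suc_pred:
  assumes "height_le E v (Suc n)" "(u, v) \<in> E"
  shows "height_le E u n"
  using assms unfolding height_le_def by (meson Suc_le_mono relpow_Suc_I)

lemma relpow_acyclic_length_le_card:
  assumes "finite V" "E \<subseteq> V \<times> V" "acyclic E" "(u, v) \<in> E ^^ n"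
  shows "n \<le> card V"
proof -
  obtain f where path: "\<forall>i<n. (f i, f (Suc i)) \<in> E"
    using assms(4) relpow_fun_conv by metis
  have "inj_on f {..<n}"
  proof (rule linorder_inj_onI')
    fix i j assume "i \<in> {..<n}" "j \<in> {..<n}" "i < j"
    then have "(f i, f j) \<in> E ^^ (j - i)"
      using path by (auto simp: relpow_fun_conv intro!: exI[of _ "\<lambda>k. f (i + k)"])
    then have "(f i, f j) \<in> E\<^sup>+"
      using \<open>i < j\<close> trancl_power by (metis zero_less_diff)
    then show "f i \<noteq> f j"
      using assms(3) unfolding acyclic_def by metis
  qed
  moreover have "f ` {..<n} \<subseteq> V"
    using path assms(2) by blast
  ultimately show ?thesis
    using card_inj_on_le[of f "{..<n}" V] assms(1) by simp
qed

lemma height_le_dag_depth: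
  assumes "finite V" "E \<subseteq> V \<times> V" "acyclic E"
  shows "height_le E v (dag_depth E)"
proof -
  have "{n. E ^^ n \<noteq> {}} \<subseteq> {..card V}"
    using relpow_acyclic_length_le_card[OF assms] by fastforce
  then have "finite {n. E ^^ n \<noteq> {}}"
    by (rule finite_subset) simp
  then show ?thesis
    unfolding height_le_def dag_depth_def by (blast intro: Max_ge)
qed

lemma funpow_agree_if_height_le:
  fixes T :: "('v \<Rightarrow> 'b) \<Rightarrow> 'v \<Rightarrow> 'b"
  assumes local: "\<And>g1 g2 v. (\<And>u. (u, v) \<in> E \<Longrightarrow> g1 u = g2 u) \<Longrightarrow> T g1 v = T g2 v"
  shows "height_le E v n \<Longrightarrow> (T ^^ Suc n) g1 v = (T ^^ Suc n) g2 v"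
proof (induction n arbitrary: v)
  case 0
  have "T g1 v = T g2 v"
    by (rule local) (use height_le_0_no_pred[OF "0.prems"] in blast)
  then show ?case by simp
next
  case (Suc n)
  have "(T ^^ Suc n) g1 u = (T ^^ Suc n) g2 u" if "(u, v) \<in> E" for u
    using Suc.IH height_le_Suc_pred[OF Suc.prems that] .
  then have "T ((T ^^ Suc n) g1) v = T ((T ^^ Suc n) g2) v"
    by (rule local)
  then show ?case by simp
qed

lemma ex1_fixpoint_if_local:
  fixes T :: "('v \<Rightarrow> 'b) \<Rightarrow> 'v \<Rightarrow> 'b"
  assumes local: "\<And>g1 g2 v. (\<And>u. (u, v) \<in> E \<Longrightarrow> g1 u = g2 u) \<Longrightarrow> T g1 v = T g2 v"
    and bounded: "\<And>v. height_le E v N"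
  shows "\<exists>!f. T f = f"
proof -
  define F where "F = T ^^ Suc N"
  have F_const: "F g1 = F g2" for g1 g2
  proof
    fix v
    show "F g1 v = F g2 v"
      unfolding F_def by (rule funpow_agree_if_height_le[where E = E and T = T, OF local bounded])
  qed
  have "T (F undefined) = F (T undefined)"
    unfolding F_def by (simp only: funpow_swap1)
  also have "\<dots> = F undefined"
    by (rule F_const)
  finally have "T (F undefined) = F undefined" .
  moreover have "f = F undefined" if "T f = f" for f
  proof -
    have "(T ^^ n) f = f" for n
      by (induction n) (simp_all add: that)
    then have "F f = f"
      unfolding F_def by blast
    then show ?thesis
      using F_const[of f undefined] by simp
  qed
  ultimately show ?thesis by blast
qed

lemma supn_nonneg: "finite S \<Longrightarrow> 0 \<le> supn S g"
  unfolding supn_def by (rule Max_ge) auto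

lemma abs_le_supn: "finite S \<Longrightarrow> s \<in> S \<Longrightarrow> \<bar>g s\<bar> \<le> supn S g"
  unfolding supn_def by (rule Max_ge) auto

lemma abs_le_of_supn_le: "finite S \<Longrightarrow> s \<in> S \<Longrightarrow> supn S g \<le> c \<Longrightarrow> \<bar>g s\<bar> \<le> c"
  by (rule order_trans[OF abs_le_supn])

lemma supn_least: "finite S \<Longrightarrow> 0 \<le> K \<Longrightarrow> (\<And>s. s \<in> S \<Longrightarrow> \<bar>g s\<bar> \<le> K) \<Longrightarrow> supn S g \<le> K"
  unfolding supn_def by (rule Max.boundedI) auto

lemma lipschitz_on_UNIV_abs_diff_le:
  fixes f :: "real \<Rightarrow> real"
  assumes "C-lipschitz_on UNIV f"
  shows "\<bar>f z - f z'\<bar> \<le> C * \<bar>z - z'\<bar>"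
  using lipschitz_onD[OF assms] by (simp add: dist_real_def)

lemma abs_weighted_sum_le:
  fixes y w :: "'a \<Rightarrow> real" and Y W :: real
  assumes "\<And>u. u \<in> P \<Longrightarrow> \<bar>y u\<bar> \<le> Y" and "\<And>u. u \<in> P \<Longrightarrow> \<bar>w u\<bar> \<le> W"
  shows "\<bar>\<Sum>u\<in>P. y u * w u\<bar> \<le> card P * (Y * W)"
proof -
  have "\<bar>\<Sum>u\<in>P. y u * w u\<bar> \<le> (\<Sum>u\<in>P. \<bar>y u\<bar> * \<bar>w u\<bar>)"
    using sum_abs[of "\<lambda>u. y u * w u" P] by (simp add: abs_mult)
  also have "\<dots> \<le> card P * (Y * W)"
    using assms by (intro sum_bounded_above mult_mono) fastforce+
  finally show ?thesis .
qed

lemma abs_weighted_sum_diff_le: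
  fixes y y' w w' :: "'a \<Rightarrow> real" and Y D W \<epsilon> :: real
  assumes "\<And>u. u \<in> P \<Longrightarrow> \<bar>y u\<bar> \<le> Y" and "\<And>u. u \<in> P \<Longrightarrow> \<bar>y u - y' u\<bar> \<le> D"
    and "\<And>u. u \<in> P \<Longrightarrow> \<bar>w' u\<bar> \<le> W" and "\<And>u. u \<in> P \<Longrightarrow> \<bar>w u - w' u\<bar> \<le> \<epsilon>"
  shows "\<bar>(\<Sum>u\<in>P. y u * w u) - (\<Sum>u\<in>P. y' u * w' u)\<bar> \<le> card P * (D * W + Y * \<epsilon>)"
proof -
  have split: "y u * w u - y' u * w' u = (y u - y' u) * w' u + y u * (w u - w' u)" for u
    by (simp add: algebra_simps)
  have "\<bar>(y u - y' u) * w' u + y u * (w u - w' u)\<bar> \<le> D * W + Y * \<epsilon>" if "u \<in> P" for u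
  proof -
    have "\<bar>(y u - y' u) * w' u\<bar> \<le> D * W" "\<bar>y u * (w u - w' u)\<bar> \<le> Y * \<epsilon>"
      using assms that unfolding abs_mult by (auto intro!: mult_mono order.trans[OF abs_ge_zero])
    then show ?thesis
      by (metis abs_triangle_ineq add_mono order_trans)
  qed
  then have "\<bar>\<Sum>u\<in>P. y u * w u - y' u * w' u\<bar> \<le> card P * (D * W + Y * \<epsilon>)"
    unfolding split by (intro order.trans[OF sum_abs] sum_bounded_above)
  then show ?thesis
    by (simp add: sum_subtractf)
qed

section \<open>Node values\<close>

definition fnn_step ::
  "'v set \<Rightarrow> ('v \<times> 'v) set \<Rightarrow> ('v \<Rightarrow> real \<Rightarrow> real) \<Rightarrow> 'v list \<Rightarrow>
   (nat \<Rightarrow> real) \<Rightarrow> ('v \<times> 'v \<Rightarrow> real) \<Rightarrow> ('v \<Rightarrow> real) \<Rightarrow> ('v \<Rightarrow> real) \<Rightarrow> 'v \<Rightarrow> real" where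
  "fnn_step V E a Xs x w b g v =
     (if v \<notin> V then 0
      else if v \<in> set Xs then x (the_inv_into {..<length Xs} ((!) Xs) v)
      else a v (b v + (\<Sum>u \<in> {u. (u, v) \<in> E}. g u * w (u, v))))"

locale fnn =
  fixes V :: "'v set" and E :: "('v \<times> 'v) set" and a :: "'v \<Rightarrow> real \<Rightarrow> real"
    and Xs Ys :: "'v list"
  assumes arch: "fnn_arch V E a Xs Ys"
begin

abbreviation val :: "(nat \<Rightarrow> real) \<Rightarrow> ('v \<times> 'v \<Rightarrow> real) \<Rightarrow> ('v \<Rightarrow> real) \<Rightarrow> 'v \<Rightarrow> real" where
  "val \<equiv> fnn_val V E a Xs"

lemma finite_V: "finite V"
  and edges_in_V: "E \<subseteq> V \<times> V"
  and acyclic_E: "acyclic E"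
  and distinct_Xs: "distinct Xs"
  and inputs_in_V: "set Xs \<subseteq> V"
  and hidden_has_pred: "v \<in> V \<Longrightarrow> v \<notin> set Xs \<Longrightarrow> \<exists>u. (u, v) \<in> E"
  using arch unfolding fnn_arch_def by auto

lemma finite_E: "finite E"
  using finite_subset[OF edges_in_V] finite_V by blast

lemma abs_act_zero_le_act_mu: "v \<in> V \<Longrightarrow> \<bar>a v 0\<bar> \<le> act_mu V a"
proof -
  assume "v \<in> V"
  then have "\<lceil>\<bar>a v 0\<bar>\<rceil> \<le> act_mu V a"
    unfolding act_mu_def using finite_V by (simp add: Max_ge)
  then show ?thesis
    by (meson le_of_int_ceiling of_int_le_iff order_trans)
qed

lemma height_le_depth: "height_le E v (dag_depth E)"
  by (rule height_le_dag_depth[OF finite_V edges_in_V acyclic_E])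

lemma node_cases:
  obtains "v \<notin> V" | i where "i < length Xs" "v = Xs ! i" | "v \<in> V" "v \<notin> set Xs"
  by (metis in_set_conv_nth)

lemma fnn_step_local:
  "(\<And>u. (u, v) \<in> E \<Longrightarrow> g1 u = g2 u) \<Longrightarrow> fnn_step V E a Xs x w b g1 v = fnn_step V E a Xs x w b g2 v"
  unfolding fnn_step_def by (auto intro!: sum.cong)

lemma fnn_step_fixpoint_iff:
  "fnn_step V E a Xs x w b f = f \<longleftrightarrow>
     (\<forall>v. v \<notin> V \<longrightarrow> f v = 0) \<and> (\<forall>i < length Xs. f (Xs ! i) = x i) \<and>
     (\<forall>v \<in> V - set Xs. f v = a v (b v + (\<Sum>u \<in> {u. (u, v) \<in> E}. f u * w (u, v))))"
    (is "_ \<longleftrightarrow> ?outside \<and> ?input \<and> ?hidden")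
proof -
  have index: "the_inv_into {..<length Xs} ((!) Xs) (Xs ! i) = i" if "i < length Xs" for i
    using the_inv_into_f_f[OF inj_on_nth[OF distinct_Xs]] that by simp
  have input_in_V: "Xs ! i \<in> V" if "i < length Xs" for i
    using inputs_in_V that by auto
  show ?thesis
  proof
    assume "fnn_step V E a Xs x w b f = f"
    then have step: "fnn_step V E a Xs x w b f v = f v" for v
      by simp
    have ?outside
      using step unfolding fnn_step_def by metis
    moreover have ?input
      using step index input_in_V unfolding fnn_step_def by (metis nth_mem)
    moreover have ?hidden
      using step unfolding fnn_step_def by (metis DiffE)
    ultimately show "?outside \<and> ?input \<and> ?hidden"
      by blast
  next
    assume eqs: "?outside \<and> ?input \<and> ?hidden"
    show "fnn_step V E a Xs x w b f = f"
    proof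
      fix v
      show "fnn_step V E a Xs x w b f v = f v"
        by (cases rule: node_cases[of v]) (use eqs index input_in_V in \<open>auto simp: fnn_step_def\<close>)
    qed
  qed
qed

lemma fnn_val_equations:
  "(\<forall>v. v \<notin> V \<longrightarrow> val x w b v = 0) \<and> (\<forall>i < length Xs. val x w b (Xs ! i) = x i) \<and>
   (\<forall>v \<in> V - set Xs. val x w b v = a v (b v + (\<Sum>u \<in> {u. (u, v) \<in> E}. val x w b u * w (u, v))))"
proof -
  have "\<exists>!f. fnn_step V E a Xs x w b f = f"
    by (rule ex1_fixpoint_if_local[OF fnn_step_local height_le_depth])
  then show ?thesis
    unfolding fnn_val_def fnn_step_fixpoint_iff by (rule theI')
qed

lemma val_outside: "v \<notin> V \<Longrightarrow> val x w b v = 0"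
  and val_input: "i < length Xs \<Longrightarrow> val x w b (Xs ! i) = x i"
  and val_hidden: "v \<in> V \<Longrightarrow> v \<notin> set Xs \<Longrightarrow>
     val x w b v = a v (b v + (\<Sum>u \<in> {u. (u, v) \<in> E}. val x w b u * w (u, v)))"
  using fnn_val_equations by blast+

lemma hidden_height_le_Suc:
  assumes "v \<in> V" "v \<notin> set Xs" "height_le E v n"
  obtains k where "n = Suc k" "\<And>u. (u, v) \<in> E \<Longrightarrow> height_le E u k"
proof -
  obtain u where "(u, v) \<in> E"
    using hidden_has_pred assms(1,2) by blast
  have "n \<noteq> 0"
  proof
    assume "n = 0"
    then show False
      using height_le_0_no_pred[of E v u] assms(3) \<open>(u, v) \<in> E\<close> by simp
  qed
  then obtain k where k: "n = Suc k"
    using not0_implies_Suc by blast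
  show ?thesis
  proof (rule that[OF k])
    fix u
    assume "(u, v) \<in> E"
    then show "height_le E u k"
      using height_le_Suc_pred[of E v k u] assms(3) unfolding k by simp
  qed
qed

end

section \<open>Growth of values and perturbations\<close>

locale lipschitz_fnn = fnn +
  fixes lam m :: real
  assumes lipschitz: "\<forall>v \<in> V. lam-lipschitz_on UNIV (a v)"
    and one_le_lam: "1 \<le> lam"
    and lam_le_m: "lam \<le> m"
    and act_zero_le: "\<forall>v \<in> V. \<bar>a v 0\<bar> \<le> m"
    and one_le_indeg: "1 \<le> max_indeg V E"
begin

abbreviation \<Delta> :: real where "\<Delta> \<equiv> real (max_indeg V E)"
abbreviation \<gamma> :: real where "\<gamma> \<equiv> 2 * \<Delta> * lam * m"
abbreviation \<kappa> :: real where "\<kappa> \<equiv> 4 * \<Delta> * lam * \<gamma>"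

lemma card_preds_le: "v \<in> V \<Longrightarrow> card {u. (u, v) \<in> E} \<le> \<Delta>"
  unfolding max_indeg_def using finite_V by (simp add: Max_ge)

lemma one_le_Delta_lam: "1 \<le> \<Delta> * lam"
  using one_le_indeg one_le_lam by (simp add: mult_ge1_I)

lemma one_le_gamma: "1 \<le> \<gamma>"
proof -
  have "1 \<le> \<Delta> * lam * m"
    using mult_ge1_I[OF one_le_Delta_lam, of m] one_le_lam lam_le_m by linarith
  then show ?thesis
    by linarith
qed

lemma gamma_le_kappa: "\<gamma> \<le> \<kappa>"
proof -
  have "1 \<le> 4 * \<Delta> * lam"
    using one_le_Delta_lam by simp
  then have "1 * \<gamma> \<le> 4 * \<Delta> * lam * \<gamma>"
    by (rule mult_right_mono) (use one_le_gamma in linarith)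
  then show ?thesis
    by simp
qed

lemma one_le_kappa: "1 \<le> \<kappa>"
  using one_le_gamma gamma_le_kappa by linarith

lemma val_bound_step:
  assumes "0 \<le> W" "0 \<le> B" "B + 1 \<le> Y"
  shows "m + lam * (B + \<Delta> * (Y * W)) \<le> \<gamma> * (W + 1) * Y"
proof -
  have "0 \<le> m" "0 \<le> Y"
    using one_le_lam lam_le_m assms by linarith+
  have "1 \<le> \<Delta> * lam * (W + 1)"
    using mult_ge1_I[OF one_le_Delta_lam, of "W + 1"] assms by simp
  then have "m * Y \<le> \<Delta> * lam * (W + 1) * (m * Y)"
    using mult_right_mono[of 1 _ "m * Y"] \<open>0 \<le> m\<close> \<open>0 \<le> Y\<close> by simp
  moreover have "m + lam * B \<le> m * Y"
  proof -
    have "lam * B \<le> m * B"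
      using lam_le_m assms by (intro mult_right_mono) simp_all
    moreover have "m * (B + 1) \<le> m * Y"
      using assms \<open>0 \<le> m\<close> by (intro mult_left_mono) simp_all
    ultimately show ?thesis
      by (simp add: algebra_simps)
  qed
  moreover have "lam * (\<Delta> * (Y * W)) \<le> \<Delta> * lam * (W + 1) * (m * Y)"
  proof -
    have "1 * (W + 1) \<le> m * (W + 1)"
      by (rule mult_right_mono) (use one_le_lam lam_le_m assms in linarith)+
    then have "(\<Delta> * lam * Y) * W \<le> (\<Delta> * lam * Y) * (m * (W + 1))"
      using one_le_Delta_lam \<open>0 \<le> Y\<close> by (intro mult_left_mono) simp_all
    then show ?thesis
      by (simp add: algebra_simps)
  qed
  ultimately show ?thesis
    by (simp add: algebra_simps)
qed

lemma diff_bound_step: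
  assumes "0 \<le> W" "0 \<le> \<epsilon>" "\<epsilon> \<le> D" "Y * \<epsilon> \<le> D"
  shows "lam * (\<epsilon> + \<Delta> * (D * (W + 1) + Y * \<epsilon>)) \<le> \<kappa> * (W + 1) * D"
proof -
  define P where "P = \<Delta> * (W + 1) * D"
  have "0 \<le> D"
    using assms by linarith
  have "1 \<le> \<Delta> * (W + 1)"
    using one_le_indeg assms by (simp add: mult_ge1_I)
  then have "1 * D \<le> \<Delta> * (W + 1) * D"
    using \<open>0 \<le> D\<close> by (rule mult_right_mono)
  then have "D \<le> P"
    unfolding P_def by simp
  have "\<Delta> * D * 1 \<le> \<Delta> * D * (W + 1)"
    using assms \<open>0 \<le> D\<close> by (intro mult_left_mono) simp_all
  then have "\<Delta> * D \<le> P"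
    unfolding P_def by (simp add: algebra_simps)
  have "\<Delta> * (Y * \<epsilon>) \<le> \<Delta> * D"
    using assms by (intro mult_left_mono) simp_all
  have "\<Delta> * (D * (W + 1) + Y * \<epsilon>) = P + \<Delta> * (Y * \<epsilon>)"
    unfolding P_def by (simp add: algebra_simps)
  then have "\<epsilon> + \<Delta> * (D * (W + 1) + Y * \<epsilon>) \<le> 3 * P"
    using assms \<open>D \<le> P\<close> \<open>\<Delta> * D \<le> P\<close> \<open>\<Delta> * (Y * \<epsilon>) \<le> \<Delta> * D\<close> by linarith
  then have "lam * (\<epsilon> + \<Delta> * (D * (W + 1) + Y * \<epsilon>)) \<le> 3 * (lam * P)"
    using one_le_lam mult_left_mono[of _ "3 * P" lam] by simp
  also have "\<dots> \<le> 4 * \<gamma> * (lam * P)"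
    using one_le_gamma one_le_lam \<open>D \<le> P\<close> \<open>0 \<le> D\<close> by (intro mult_right_mono) simp_all
  also have "\<dots> = \<kappa> * (W + 1) * D"
    unfolding P_def by (simp add: algebra_simps)
  finally show ?thesis .
qed

context
  fixes x :: "nat \<Rightarrow> real" and w b
    and W B X :: real
  assumes w_le: "\<And>e. e \<in> E \<Longrightarrow> \<bar>w e\<bar> \<le> W"
    and b_le: "\<And>v. v \<in> V \<Longrightarrow> \<bar>b v\<bar> \<le> B"
    and x_le: "\<And>i. i < length Xs \<Longrightarrow> \<bar>x i\<bar> \<le> X"
    and nonneg: "0 \<le> W" "0 \<le> B" "0 \<le> X"
begin

lemma size_le_scaled: "1 \<le> c \<Longrightarrow> X + B + 1 \<le> c ^ k * (W + 1) ^ k * (X + B + 1)"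
  using mult_right_mono[of 1 "c ^ k * (W + 1) ^ k" "X + B + 1"] nonneg
  by (simp add: mult_ge1_I)

lemma kappa_scaled_ge:
  assumes "0 \<le> \<epsilon>"
  shows "\<epsilon> \<le> \<kappa> ^ k * (W + 1) ^ k * (X + B + 1) * \<epsilon>"
    and "\<gamma> ^ k * (W + 1) ^ k * (X + B + 1) * \<epsilon> \<le> \<kappa> ^ k * (W + 1) ^ k * (X + B + 1) * \<epsilon>"
proof -
  have "X + B + 1 \<le> \<kappa> ^ k * (W + 1) ^ k * (X + B + 1)"
    by (rule size_le_scaled[OF one_le_kappa])
  then have "1 * \<epsilon> \<le> (\<kappa> ^ k * (W + 1) ^ k * (X + B + 1)) * \<epsilon>"
    using nonneg assms by (intro mult_right_mono) linarith+
  then show "\<epsilon> \<le> \<kappa> ^ k * (W + 1) ^ k * (X + B + 1) * \<epsilon>"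
    by simp
  have "\<gamma> ^ k \<le> \<kappa> ^ k"
    using gamma_le_kappa one_le_gamma by (intro power_mono) linarith+
  then show "\<gamma> ^ k * (W + 1) ^ k * (X + B + 1) * \<epsilon> \<le> \<kappa> ^ k * (W + 1) ^ k * (X + B + 1) * \<epsilon>"
    using nonneg assms by (intro mult_right_mono) simp_all
qed

lemma hidden_val_abs_le:
  assumes "v \<in> V" "v \<notin> set Xs" "0 \<le> Y"
    and preds_le: "\<And>u. (u, v) \<in> E \<Longrightarrow> \<bar>val x w b u\<bar> \<le> Y"
  shows "\<bar>val x w b v\<bar> \<le> m + lam * (B + \<Delta> * (Y * W))"
proof -
  let ?z = "b v + (\<Sum>u | (u, v) \<in> E. val x w b u * w (u, v))"
  have "\<bar>\<Sum>u | (u, v) \<in> E. val x w b u * w (u, v)\<bar> \<le> card {u. (u, v) \<in> E} * (Y * W)"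
    by (rule abs_weighted_sum_le) (use preds_le w_le in auto)
  also have "\<dots> \<le> \<Delta> * (Y * W)"
    using card_preds_le[OF \<open>v \<in> V\<close>] \<open>0 \<le> Y\<close> nonneg by (intro mult_right_mono) simp_all
  finally have "\<bar>?z\<bar> \<le> B + \<Delta> * (Y * W)"
    using b_le[OF \<open>v \<in> V\<close>] by linarith
  have "\<bar>a v ?z - a v 0\<bar> \<le> lam * \<bar>?z - 0\<bar>"
    using lipschitz \<open>v \<in> V\<close> by (blast intro: lipschitz_on_UNIV_abs_diff_le)
  then have "\<bar>val x w b v\<bar> \<le> \<bar>a v 0\<bar> + lam * \<bar>?z\<bar>"
    using val_hidden[OF assms(1,2)] by simp
  also have "\<dots> \<le> m + lam * (B + \<Delta> * (Y * W))"
    using act_zero_le \<open>v \<in> V\<close> \<open>\<bar>?z\<bar> \<le> _\<close> one_le_lam by (intro add_mono mult_left_mono) auto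
  finally show ?thesis .
qed

lemma val_abs_le: "height_le E v n \<Longrightarrow> \<bar>val x w b v\<bar> \<le> \<gamma> ^ n * (W + 1) ^ n * (X + B + 1)"
proof (induction n arbitrary: v rule: less_induct)
  case (less n)
  have size_le: "X + B + 1 \<le> \<gamma> ^ n * (W + 1) ^ n * (X + B + 1)"
    using size_le_scaled one_le_gamma by blast
  show ?case
  proof (cases rule: node_cases[of v])
    case 1
    then show ?thesis
      using size_le nonneg by (simp add: val_outside)
  next
    case (2 i)
    then have "\<bar>val x w b v\<bar> \<le> X"
      using val_input x_le by simp
    then show ?thesis
      using size_le nonneg by linarith
  next
    case 3
    obtain k where n: "n = Suc k" and preds: "\<And>u. (u, v) \<in> E \<Longrightarrow> height_le E u k"
      using hidden_height_le_Suc[OF 3 less.prems] by blast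
    define Y where "Y = \<gamma> ^ k * (W + 1) ^ k * (X + B + 1)"
    have "X + B + 1 \<le> Y"
      unfolding Y_def using size_le_scaled one_le_gamma by blast
    have "\<bar>val x w b u\<bar> \<le> Y" if "(u, v) \<in> E" for u
      unfolding Y_def by (rule less.IH[OF _ preds[OF that]]) (simp add: n)
    moreover have "B + 1 \<le> Y" "0 \<le> Y"
      using \<open>X + B + 1 \<le> Y\<close> nonneg by linarith+
    ultimately have "\<bar>val x w b v\<bar> \<le> m + lam * (B + \<Delta> * (Y * W))"
      using hidden_val_abs_le[OF 3] by blast
    also have "\<dots> \<le> \<gamma> * (W + 1) * Y"
      by (rule val_bound_step[OF nonneg(1,2) \<open>B + 1 \<le> Y\<close>])
    also have "\<dots> = \<gamma> ^ n * (W + 1) ^ n * (X + B + 1)"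
      unfolding Y_def n by (simp add: algebra_simps)
    finally show ?thesis .
  qed
qed

lemma hidden_val_diff_le:
  assumes "v \<in> V" "v \<notin> set Xs" "0 \<le> Y" "0 \<le> D"
    and preds_le: "\<And>u. (u, v) \<in> E \<Longrightarrow> \<bar>val x w b u\<bar> \<le> Y"
    and preds_diff: "\<And>u. (u, v) \<in> E \<Longrightarrow> \<bar>val x w b u - val x w' b' u\<bar> \<le> D"
    and b_diff: "\<bar>b v - b' v\<bar> \<le> \<epsilon>"
    and w_diff: "\<And>e. e \<in> E \<Longrightarrow> \<bar>w e - w' e\<bar> \<le> \<epsilon>" and "\<epsilon> \<le> 1"
  shows "\<bar>val x w b v - val x w' b' v\<bar> \<le> lam * (\<epsilon> + \<Delta> * (D * (W + 1) + Y * \<epsilon>))"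
proof -
  let ?s = "\<Sum>u | (u, v) \<in> E. val x w b u * w (u, v)"
  let ?s' = "\<Sum>u | (u, v) \<in> E. val x w' b' u * w' (u, v)"
  have "\<bar>w' e\<bar> \<le> W + 1" if "e \<in> E" for e
    using w_le[OF that] w_diff[OF that] \<open>\<epsilon> \<le> 1\<close> by linarith
  then have "\<bar>?s - ?s'\<bar> \<le> card {u. (u, v) \<in> E} * (D * (W + 1) + Y * \<epsilon>)"
    by (intro abs_weighted_sum_diff_le) (use preds_le preds_diff w_diff in auto)
  also have "\<dots> \<le> \<Delta> * (D * (W + 1) + Y * \<epsilon>)"
    using card_preds_le[OF \<open>v \<in> V\<close>] \<open>0 \<le> Y\<close> \<open>0 \<le> D\<close> b_diff nonneg
    by (intro mult_right_mono) simp_all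
  finally have z_diff: "\<bar>(b v + ?s) - (b' v + ?s')\<bar> \<le> \<epsilon> + \<Delta> * (D * (W + 1) + Y * \<epsilon>)"
    using b_diff by linarith
  have "\<bar>val x w b v - val x w' b' v\<bar> = \<bar>a v (b v + ?s) - a v (b' v + ?s')\<bar>"
    using val_hidden[OF assms(1,2)] by simp
  also have "\<dots> \<le> lam * \<bar>(b v + ?s) - (b' v + ?s')\<bar>"
    using lipschitz \<open>v \<in> V\<close> by (blast intro: lipschitz_on_UNIV_abs_diff_le)
  also have "\<dots> \<le> lam * (\<epsilon> + \<Delta> * (D * (W + 1) + Y * \<epsilon>))"
    using z_diff one_le_lam by (intro mult_left_mono) simp_all
  finally show ?thesis .
qed

lemma val_diff_le:
  assumes b_diff: "\<And>v. v \<in> V \<Longrightarrow> \<bar>b v - b' v\<bar> \<le> \<epsilon>"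
    and w_diff: "\<And>e. e \<in> E \<Longrightarrow> \<bar>w e - w' e\<bar> \<le> \<epsilon>"
    and "0 \<le> \<epsilon>" "\<epsilon> \<le> 1"
  shows "height_le E v n \<Longrightarrow>
    \<bar>val x w b v - val x w' b' v\<bar> \<le> \<kappa> ^ n * (W + 1) ^ n * (X + B + 1) * \<epsilon>"
proof (induction n arbitrary: v rule: less_induct)
  case (less n)
  have bound_nonneg: "0 \<le> \<kappa> ^ n * (W + 1) ^ n * (X + B + 1) * \<epsilon>"
    using kappa_scaled_ge(1)[OF \<open>0 \<le> \<epsilon>\<close>, of n] \<open>0 \<le> \<epsilon>\<close> by linarith
  consider "val x w b v = val x w' b' v" | "v \<in> V" "v \<notin> set Xs"
    by (cases rule: node_cases[of v]) (auto simp: val_outside val_input)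
  then show ?case
  proof cases
    case 1
    then show ?thesis
      using bound_nonneg by simp
  next
    case 2
    obtain k where n: "n = Suc k" and preds: "\<And>u. (u, v) \<in> E \<Longrightarrow> height_le E u k"
      using hidden_height_le_Suc[OF 2 less.prems] by blast
    define Y where "Y = \<gamma> ^ k * (W + 1) ^ k * (X + B + 1)"
    define D where "D = \<kappa> ^ k * (W + 1) ^ k * (X + B + 1) * \<epsilon>"
    have "0 \<le> Y"
      unfolding Y_def using size_le_scaled[OF one_le_gamma, of k] nonneg by linarith
    have "\<epsilon> \<le> D" "Y * \<epsilon> \<le> D"
      unfolding Y_def D_def using kappa_scaled_ge[OF \<open>0 \<le> \<epsilon>\<close>] by simp_all
    have preds_le: "\<bar>val x w b u\<bar> \<le> Y" if "(u, v) \<in> E" for u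
      unfolding Y_def by (rule val_abs_le[OF preds[OF that]])
    have preds_diff: "\<bar>val x w b u - val x w' b' u\<bar> \<le> D" if "(u, v) \<in> E" for u
      unfolding D_def by (rule less.IH[OF _ preds[OF that]]) (simp add: n)
    have "\<bar>val x w b v - val x w' b' v\<bar> \<le> lam * (\<epsilon> + \<Delta> * (D * (W + 1) + Y * \<epsilon>))"
      using 2 \<open>0 \<le> \<epsilon>\<close> \<open>\<epsilon> \<le> D\<close>
      by (intro hidden_val_diff_le[OF 2 \<open>0 \<le> Y\<close> _ preds_le preds_diff b_diff w_diff \<open>\<epsilon> \<le> 1\<close>]) auto
    also have "\<dots> \<le> \<kappa> * (W + 1) * D"
      by (rule diff_bound_step[OF nonneg(1) \<open>0 \<le> \<epsilon>\<close> \<open>\<epsilon> \<le> D\<close> \<open>Y * \<epsilon> \<le> D\<close>])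
    also have "\<dots> = \<kappa> ^ n * (W + 1) ^ n * (X + B + 1) * \<epsilon>"
      unfolding D_def n by (simp add: algebra_simps)
    finally show ?thesis .
  qed
qed

end

end

theorem lemma6p7:
  fixes V :: "'v set" and E :: "('v \<times> 'v) set" and a :: "'v \<Rightarrow> real \<Rightarrow> real"
    and Xs Ys :: "'v list" and lam :: nat
    and eps :: real and x :: "nat \<Rightarrow> real" and b b' :: "'v \<Rightarrow> real"
    and w w' :: "'v \<times> 'v \<Rightarrow> real"
  assumes arch: "fnn_arch V E a Xs Ys"
    and Delta_ge1: "max_indeg V E \<ge> 1"
    and lam_pos: "lam > 0"
    and lip: "\<forall>v \<in> V. (real lam)-lipschitz_on UNIV (a v)"
    and eps: "0 \<le> max (supn V (\<lambda>v. b v - b' v)) (supn E (\<lambda>e. w e - w' e))"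
             "max (supn V (\<lambda>v. b v - b' v)) (supn E (\<lambda>e. w e - w' e)) \<le> eps"
             "eps \<le> 1"
  shows "let d = dag_depth E; \<Delta> = real (max_indeg V E); \<mu> = real_of_int (act_mu V a);
             \<gamma> = 2 * \<Delta> * real lam * max (real lam) \<mu>;
             \<nu> = (4 * \<Delta> * real lam * \<gamma>) ^ d
         in supn {..<length Ys}
              (\<lambda>i. fnn_out V E a Xs Ys x w b ! i - fnn_out V E a Xs Ys x w' b' ! i)
            \<le> \<nu> * (supn E w + 1) ^ d
                 * (supn {..<length Xs} x + supn V b + 1) * eps"
proof -
  let ?\<mu> = "real_of_int (act_mu V a)"
  interpret fnn V E a Xs Ys
    by (rule fnn.intro[OF arch])
  interpret lipschitz_fnn V E a Xs Ys "real lam" "max (real lam) ?\<mu>"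
    using lip lam_pos Delta_ge1 abs_act_zero_le_act_mu by unfold_locales (auto simp: le_max_iff_disj)
  have "supn V (\<lambda>v. b v - b' v) \<le> eps" "supn E (\<lambda>e. w e - w' e) \<le> eps" "0 \<le> eps"
    using eps(1,2) by auto
  then have "\<bar>fnn_val V E a Xs x w b v - fnn_val V E a Xs x w' b' v\<bar>
      \<le> \<kappa> ^ dag_depth E * (supn E w + 1) ^ dag_depth E
          * (supn {..<length Xs} x + supn V b + 1) * eps" for v
    by (intro val_diff_le[OF abs_le_supn[OF finite_E] abs_le_supn[OF finite_V] abs_le_supn
          supn_nonneg[OF finite_E] supn_nonneg[OF finite_V] supn_nonneg _ _ _ eps(3) height_le_depth])
      (auto intro: abs_le_of_supn_le[OF finite_V] abs_le_of_supn_le[OF finite_E])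
  then show ?thesis
    unfolding Let_def fnn_out_def
    by (intro supn_least) (auto intro: order_trans[OF abs_ge_zero])
qed

end
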